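(* Suppose $f(\cdot;0,1)$ satisfies Condition C3 and that for every $\mu\in\mathbb{R}$, $$\int_{\mathbb{R}}\{\log f(x;\mu,1)\}\,f(x;0,1)\,dx>-\infty.$$ Then for every $\Psi_0\in\boldsymbol{\Psi}_m$ and every $\sigma_0>0$, $\int_{\mathbb{R}}|\log g(x;\Psi_0,\sigma_0)|\,g(x;\Psi_0,\sigma_0)\,dx<\infty$ (i.e. Condition C2 holds).
   Context: Fix a positive integer $m$. Let $f(x;0,1)$ be a probability density on $\mathbb{R}$, $f(x;\mu,\sigma)=\sigma^{-1}f((x-\mu)/\sigma;0,1)$, $\boldsymbol{\Psi}_m=\{\sum_{j=1}^m\alpha_j I(\mu_j\le\mu):\alpha_j\ge0,\sum_j\alpha_j=1,\mu_j\in\mathbb{R}\}$, $g(x;\Psi,\sigma)=\sum_{j=1}^m\alpha_j f(x;\mu_j,\sigma)$. (C3) There exist $v_0,v_1>0$ and $\beta>1$ such that $f(x;0,1)\le\min\{v_0,v_1|x|^{-\beta}\}$ for all $x$. *)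

theory Defs
  imports "HOL-Analysis.Analysis"
begin

definition ls_dens :: "(real \<Rightarrow> real) \<Rightarrow> real \<Rightarrow> real \<Rightarrow> real \<Rightarrow> real" where
  "ls_dens f0 x \<mu> \<sigma> = f0 ((x - \<mu>) / \<sigma>) / \<sigma>"

definition is_density :: "(real \<Rightarrow> real) \<Rightarrow> bool" where
  "is_density f0 \<longleftrightarrow> f0 \<in> borel_measurable borel \<and> (\<forall>x. 0 \<le> f0 x)
     \<and> integrable lborel f0 \<and> integral\<^sup>L lborel f0 = 1"

text \<open>Condition (C3). The bound v1 |x|^-beta is read as +infinity at x = 0.\<close>
definition cond_C3 :: "(real \<Rightarrow> real) \<Rightarrow> bool" where
  "cond_C3 f0 \<longleftrightarrow> (\<exists>v0 v1 \<beta>. v0 > 0 \<and> v1 > 0 \<and> \<beta> > 1 \<and>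
     (\<forall>x. f0 x \<le> v0 \<and> (x \<noteq> 0 \<longrightarrow> f0 x \<le> v1 * \<bar>x\<bar> powr (-\<beta>))))"

text \<open>Mixing distribution Psi in Psi_m, given by weights alpha_j and atoms mu_j, j < m.\<close>
definition in_Psi :: "nat \<Rightarrow> (nat \<Rightarrow> real) \<Rightarrow> (nat \<Rightarrow> real) \<Rightarrow> bool" where
  "in_Psi m \<alpha> \<mu> \<longleftrightarrow> (\<forall>j<m. 0 \<le> \<alpha> j) \<and> (\<Sum>j<m. \<alpha> j) = 1"

definition mix_dens :: "(real \<Rightarrow> real) \<Rightarrow> nat \<Rightarrow> (nat \<Rightarrow> real) \<Rightarrow> (nat \<Rightarrow> real) \<Rightarrow> real \<Rightarrow> real \<Rightarrow> real" where
  "mix_dens f0 m \<alpha> \<mu> \<sigma> x = (\<Sum>j<m. \<alpha> j * ls_dens f0 x (\<mu> j) \<sigma>)"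

definition neg_log :: "real \<Rightarrow> ennreal" where
  "neg_log y = (if y > 0 then ennreal (max 0 (- ln y)) else \<infinity>)"

end

theory Submission
  imports Defs
begin

text \<open>Write |log g| g = g log+ g + g log- g. By (C3) the mixture g is bounded by
v0/sigma0, so g log+ g is at most a constant multiple of g. Since g dominates each of its
components a_j = alpha_j f(x; mu_j, sigma0) and log- is antitone, g log- g is at most
the sum of the a_j log- a_j; as log- of a product is at most the sum of the log-'s,
each of these is bounded by rescaled translates of f0 and of f0 log- f0. The latter is
integrable by the hypothesis at mu = 0.\<close>

definition neg_ln :: "real \<Rightarrow> real" where
  "neg_ln t = max 0 (- ln t)"

lemma neg_ln_nonneg: "0 \<le> neg_ln t"
  by (simp add: neg_ln_def)

lemma neg_ln_antimono:
  assumes "0 < x" "x \<le> y"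
  shows "neg_ln y \<le> neg_ln x"
proof -
  have "ln x \<le> ln y"
    using assms by simp
  then show ?thesis
    by (simp add: neg_ln_def)
qed

lemma neg_ln_mult_le:
  assumes "0 < x" "0 < y"
  shows "neg_ln (x * y) \<le> neg_ln x + neg_ln y"
  using assms by (simp add: neg_ln_def ln_mult)

lemma ennreal_mult_neg_ln:
  assumes "0 \<le> t"
  shows "ennreal (t * neg_ln t) = ennreal t * neg_log t"
proof (cases "t = 0")
  case False
  with assms show ?thesis
    by (simp add: neg_ln_def neg_log_def ennreal_mult max.commute)
qed simp

lemma mult_neg_ln_mult_le:
  assumes "0 \<le> c" "0 \<le> t"
  shows "c * t * neg_ln (c * t) \<le> c * (t * neg_ln t) + neg_ln c * c * t"
proof (cases "c = 0 \<or> t = 0")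
  case False
  with assms have "neg_ln (c * t) \<le> neg_ln c + neg_ln t"
    by (intro neg_ln_mult_le) auto
  then have "c * t * neg_ln (c * t) \<le> c * t * (neg_ln c + neg_ln t)"
    using assms by (intro mult_left_mono) auto
  then show ?thesis
    by (simp add: algebra_simps)
qed auto

lemma abs_ln_sum_mult_le:
  assumes "finite I" "\<And>k. k \<in> I \<Longrightarrow> 0 \<le> a k" "(\<Sum>k\<in>I. a k) \<le> B"
  shows "\<bar>ln (\<Sum>k\<in>I. a k)\<bar> * (\<Sum>k\<in>I. a k)
           \<le> max 0 (ln B) * (\<Sum>k\<in>I. a k) + (\<Sum>k\<in>I. a k * neg_ln (a k))"
proof -
  define s where "s = (\<Sum>k\<in>I. a k)"
  have s_nonneg: "0 \<le> s"
    unfolding s_def using assms(2) by (simp add: sum_nonneg)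
  have neg_part: "(\<Sum>k\<in>I. a k * neg_ln s) \<le> (\<Sum>k\<in>I. a k * neg_ln (a k))"
  proof (rule sum_mono)
    fix k
    assume k: "k \<in> I"
    have "a k \<le> s"
      unfolding s_def using assms(1,2) k by (intro member_le_sum) auto
    then show "a k * neg_ln s \<le> a k * neg_ln (a k)"
      using assms(2)[OF k] by (cases "a k = 0") (auto intro: mult_left_mono neg_ln_antimono)
  qed
  show ?thesis
  proof (cases "s = 0")
    case True
    then show ?thesis
      unfolding s_def[symmetric]
      using assms(2) by (auto intro!: sum_nonneg mult_nonneg_nonneg neg_ln_nonneg)
  next
    case False
    with s_nonneg have "0 < s" by simp
    with assms(3) have "ln s \<le> ln B"
      unfolding s_def by simp
    then have "max 0 (ln s) \<le> max 0 (ln B)"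
      by simp
    then have "max 0 (ln s) * s \<le> max 0 (ln B) * s"
      using s_nonneg by (rule mult_right_mono)
    moreover have "\<bar>ln s\<bar> * s = max 0 (ln s) * s + (\<Sum>k\<in>I. a k * neg_ln s)"
      by (simp add: s_def[symmetric] sum_distrib_right[symmetric] neg_ln_def abs_if max_def algebra_simps)
    ultimately show ?thesis
      using neg_part unfolding s_def[symmetric] by linarith
  qed
qed

lemma mix_dens_eq:
  "mix_dens f0 m \<alpha> \<mu> \<sigma> x = (\<Sum>j<m. \<alpha> j / \<sigma> * f0 ((x - \<mu> j) / \<sigma>))"
  unfolding mix_dens_def ls_dens_def by simp

lemma abs_ln_mix_dens_le:
  assumes "in_Psi m \<alpha> \<mu>" "0 < \<sigma>" "\<And>y. 0 \<le> f0 y" "\<And>y. f0 y \<le> v0"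
  shows "\<bar>ln (mix_dens f0 m \<alpha> \<mu> \<sigma> x)\<bar> * mix_dens f0 m \<alpha> \<mu> \<sigma> x
           \<le> max 0 (ln (v0 / \<sigma>)) * mix_dens f0 m \<alpha> \<mu> \<sigma> x
           + (\<Sum>j<m. \<alpha> j / \<sigma> * (f0 ((x - \<mu> j) / \<sigma>) * neg_ln (f0 ((x - \<mu> j) / \<sigma>)))
                    + neg_ln (\<alpha> j / \<sigma>) * (\<alpha> j / \<sigma>) * f0 ((x - \<mu> j) / \<sigma>))"
proof -
  define g where "g = mix_dens f0 m \<alpha> \<mu> \<sigma> x"
  define c where "c j = \<alpha> j / \<sigma>" for j
  define t where "t j = f0 ((x - \<mu> j) / \<sigma>)" for j
  have c_nonneg: "0 \<le> c j" if "j < m" for j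
    using assms(1,2) that unfolding in_Psi_def c_def by simp
  have g_eq: "g = (\<Sum>j<m. c j * t j)"
    unfolding g_def mix_dens_eq c_def t_def ..
  have "(\<Sum>j<m. c j * t j) \<le> (\<Sum>j<m. c j * v0)"
    by (intro sum_mono mult_left_mono) (simp_all add: c_nonneg t_def assms(4))
  also have "\<dots> = v0 / \<sigma>"
    using assms(1) unfolding in_Psi_def c_def
    by (simp add: sum_distrib_right[symmetric] sum_divide_distrib[symmetric])
  finally have "\<bar>ln g\<bar> * g
      \<le> max 0 (ln (v0 / \<sigma>)) * g + (\<Sum>j<m. c j * t j * neg_ln (c j * t j))"
    unfolding g_eq using c_nonneg assms(3) t_def by (intro abs_ln_sum_mult_le) auto
  also have "\<dots> \<le> max 0 (ln (v0 / \<sigma>)) * g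
                  + (\<Sum>j<m. c j * (t j * neg_ln (t j)) + neg_ln (c j) * c j * t j)"
    using c_nonneg assms(3) unfolding t_def
    by (intro add_left_mono sum_mono mult_neg_ln_mult_le) auto
  finally show ?thesis
    unfolding g_def c_def t_def .
qed

lemma integrable_lborel_rescale:
  fixes F :: "real \<Rightarrow> 'a::{banach, second_countable_topology}"
  assumes "integrable lborel F" "\<sigma> \<noteq> 0"
  shows "integrable lborel (\<lambda>x. F ((x - \<mu>) / \<sigma>))"
proof -
  have "integrable lborel (\<lambda>x. F (- \<mu> / \<sigma> + 1 / \<sigma> * x))"
    using assms by (intro lborel_integrable_real_affine) simp_all
  moreover have "(\<lambda>x. F (- \<mu> / \<sigma> + 1 / \<sigma> * x)) = (\<lambda>x. F ((x - \<mu>) / \<sigma>))"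
    by (simp add: diff_divide_distrib)
  ultimately show ?thesis
    by simp
qed

lemma integrable_mult_neg_ln:
  fixes f :: "real \<Rightarrow> real"
  assumes "f \<in> borel_measurable borel" "\<And>x. 0 \<le> f x"
    and "(\<integral>\<^sup>+ x. ennreal (f x) * neg_log (f x) \<partial>lborel) < \<infinity>"
  shows "integrable lborel (\<lambda>x. f x * neg_ln (f x))"
proof (rule integrableI_nonneg)
  show "(\<lambda>x. f x * neg_ln (f x)) \<in> borel_measurable lborel"
    unfolding neg_ln_def using assms(1) by measurable
  show "AE x in lborel. 0 \<le> f x * neg_ln (f x)"
    using assms(2) neg_ln_nonneg by simp
  show "(\<integral>\<^sup>+ x. ennreal (f x * neg_ln (f x)) \<partial>lborel) < \<infinity>"
    using assms(3) by (simp add: ennreal_mult_neg_ln assms(2))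
qed

lemma nn_integral_less_top_if_dominated:
  fixes f g :: "'a \<Rightarrow> real"
  assumes "integrable M g" "\<And>x. f x \<le> g x"
  shows "(\<integral>\<^sup>+ x. ennreal (f x) \<partial>M) < \<infinity>"
proof -
  have "(\<integral>\<^sup>+ x. ennreal (f x) \<partial>M) \<le> (\<integral>\<^sup>+ x. ennreal (norm (g x)) \<partial>M)"
    using assms(2) by (intro nn_integral_mono ennreal_leI) (auto intro: order_trans[OF _ abs_ge_self])
  also have "\<dots> < \<infinity>"
    using assms(1) unfolding integrable_iff_bounded by simp
  finally show ?thesis .
qed

theorem proposition1:
  fixes f0 :: "real \<Rightarrow> real" and m :: nat
  assumes "m > 0"
    and "is_density f0"
    and "cond_C3 f0"
    and "\<forall>\<mu>::real. (\<integral>\<^sup>+ x. ennreal (f0 x) * neg_log (ls_dens f0 x \<mu> 1) \<partial>lborel) < \<infinity>"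
  shows "\<forall>\<alpha> \<mu> \<sigma>0. in_Psi m \<alpha> \<mu> \<and> \<sigma>0 > 0 \<longrightarrow>
     (\<integral>\<^sup>+ x. ennreal (\<bar>ln (mix_dens f0 m \<alpha> \<mu> \<sigma>0 x)\<bar> * mix_dens f0 m \<alpha> \<mu> \<sigma>0 x) \<partial>lborel) < \<infinity>"
proof (intro allI impI, elim conjE)
  fix \<alpha> \<mu> and \<sigma>0 :: real
  assume Psi: "in_Psi m \<alpha> \<mu>" and \<sigma>0: "\<sigma>0 > 0"
  have f0_meas: "f0 \<in> borel_measurable borel" and f0_nonneg: "\<And>x. 0 \<le> f0 x"
    and f0_int: "integrable lborel f0"
    using assms(2) unfolding is_density_def by auto
  obtain v0 where f0_bounded: "\<And>x. f0 x \<le> v0"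
    using assms(3) unfolding cond_C3_def by blast
  have "integrable lborel (\<lambda>x. f0 x * neg_ln (f0 x))"
    using assms(4)[rule_format, of 0] f0_meas f0_nonneg
    by (intro integrable_mult_neg_ln) (simp_all add: ls_dens_def)
  then have "integrable lborel (\<lambda>x. max 0 (ln (v0 / \<sigma>0)) * mix_dens f0 m \<alpha> \<mu> \<sigma>0 x
           + (\<Sum>j<m. \<alpha> j / \<sigma>0 * (f0 ((x - \<mu> j) / \<sigma>0) * neg_ln (f0 ((x - \<mu> j) / \<sigma>0)))
                    + neg_ln (\<alpha> j / \<sigma>0) * (\<alpha> j / \<sigma>0) * f0 ((x - \<mu> j) / \<sigma>0)))"
    unfolding mix_dens_eq using \<sigma>0 f0_int
    by (intro Bochner_Integration.integrable_add Bochner_Integration.integrable_mult_right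
        Bochner_Integration.integrable_sum integrable_lborel_rescale) auto
  then show "(\<integral>\<^sup>+ x. ennreal (\<bar>ln (mix_dens f0 m \<alpha> \<mu> \<sigma>0 x)\<bar> * mix_dens f0 m \<alpha> \<mu> \<sigma>0 x) \<partial>lborel) < \<infinity>"
    by (rule nn_integral_less_top_if_dominated)
      (rule abs_ln_mix_dens_le[OF Psi \<sigma>0 f0_nonneg f0_bounded])
qed

end
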